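(* Assume (MA1) holds and let $\{x_k\}$ be generated by Algorithm R2N. Suppose the algorithm generates infinitely many successful iterations, that there is $(f+h)_{\rm low}\in\mathbb{R}$ with $(f+h)(x_k)\ge(f+h)_{\rm low}$ for all $k$, and that there is $\alpha>0$ with $\nu_k^{-1/2}\xi_{cp}(x_k,\nu_k^{-1})^{1/2}\ge\alpha$ for all $k\in\mathbb{N}$. Then $\{x_k\}$ is a Cauchy sequence and hence converges.
   Context: Setting: $f:\mathbb{R}^n\to\mathbb{R}$ continuously differentiable, $h:\mathbb{R}^n\to\mathbb{R}\cup\{+\infty\}$ proper lower semicontinuous; $\partial$ = limiting subdifferential; $\|\cdot\|$ Euclidean norm on vectors, spectral norm on matrices. A function $g$ is prox-bounded if there exist $\nu>0$, $x$ with $\inf_y g(y)+\frac1{2\nu}\|y-x\|^2>-\infty$; its threshold is the supremum of such $\nu$. For each $x$, $B(x)$ is symmetric and $\psi(\cdot;x):\mathbb{R}^n\to\mathbb{R}\cup\{+\infty\}$. $\varphi(s;x)=f(x)+\nabla f(x)^Ts+\tfrac12s^TB(x)s$, $m(s;x,\sigma)=\varphi(s;x)+\tfrac12\sigma\|s\|^2+\psi(s;x)$; $\varphi_{cp}(s;x)=f(x)+\nabla f(x)^Ts$, $m_{cp}(s;x,\nu^{-1})=\varphi_{cp}(s;x)+\tfrac12\nu^{-1}\|s\|^2+\psi(s;x)$, $P_{cp}(x,\nu^{-1})=\operatorname{argmin}_s m_{cp}(s;x,\nu^{-1})$, and for $s_{cp}\in P_{cp}(x,\nu^{-1})$, $\xi_{cp}(x,\nu^{-1})=f(x)+h(x)-(\varphi_{cp}(s_{cp};x)+\psi(s_{cp};x))$.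 (MA1): for every $x$, $\psi(\cdot;x)$ is proper, lsc, prox-bounded with threshold $\lambda_x$, $\psi(0;x)=h(x)$, $\partial\psi(0;x)=\partial h(x)$. Algorithm R2N: constants $0<\theta_1<1<\theta_2$, $0<\eta_1\le\eta_2<1$, $0<\gamma_3\le1<\gamma_1\le\gamma_2$; $x_0$ with $h(x_0)<\infty$, $\sigma_0>0$. For $k=0,1,\dots$: choose symmetric $B_k=B(x_k)$; set $\nu_k=\theta_1/(\|B_k\|+\sigma_k)$; compute $s_{k,cp}\in P_{cp}(x_k,\nu_k^{-1})$ and $\xi_{cp}(x_k,\nu_k^{-1})$ (using $s_{k,cp}$); compute $s_k$ with $m(s_k;x_k,\sigma_k)\le m(s_{k,cp};x_k,\sigma_k)$; if $\|s_k\|>\theta_2\|s_{k,cp}\|$, reset $s_k=s_{k,cp}$; compute $\rho_k=\frac{(f+h)(x_k)-(f+h)(x_k+s_k)}{\varphi(0;x_k)+\psi(0;x_k)-\varphi(s_k;x_k)-\psi(s_k;x_k)}$ (extended arithmetic: $\pm\infty\cdot0=0$, $(\pm\infty)/(\pm\infty)=0$); if $\rho_k\ge\eta_1$ set $x_{k+1}=x_k+s_k$, else $x_{k+1}=x_k$; choose $\sigma_{k+1}\in[\gamma_3\sigma_k,\sigma_k]$ if $\rho_k\ge\eta_2$ (very successful), $\sigma_{k+1}\in[\sigma_k,\gamma_1\sigma_k]$ if $\eta_1\le\rho_k<\eta_2$, $\sigma_{k+1}\in[\gamma_1\sigma_k,\gamma_2\sigma_k]$ if $\rho_k<\eta_1$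 (unsuccessful). $\mathcal S=\{k:\rho_k\ge\eta_1\}$ (successful iterations), $\mathcal S_k=\{i\in\mathcal S:i\le k\}$, $\mathcal U=\mathbb N\setminus\mathcal S$, $\mathcal U_k=\{i\in\mathcal U:i\le k\}$. *)

theory Defs
  imports "HOL-Analysis.Analysis"
begin

text \<open>R^n is rendered as real^'n (finite index type 'n), functions with values in
 R \<union> {+\<infinity>} as ereal-valued functions that never take the value -\<infinity>.\<close>

definition proper_fun :: "('a::real_normed_vector \<Rightarrow> ereal) \<Rightarrow> bool" where
  "proper_fun g \<longleftrightarrow> (\<forall>x. g x \<noteq> -\<infinity>) \<and> (\<exists>x. g x \<noteq> \<infinity>)"

definition lsc_fun :: "('a::real_normed_vector \<Rightarrow> ereal) \<Rightarrow> bool" where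
  "lsc_fun g \<longleftrightarrow> (\<forall>x y. y \<longlonglongrightarrow> x \<longrightarrow> g x \<le> liminf (\<lambda>j. g (y j)))"

definition prox_bounded :: "('a::real_normed_vector \<Rightarrow> ereal) \<Rightarrow> bool" where
  "prox_bounded g \<longleftrightarrow>
     (\<exists>\<nu>>0. \<exists>x. (INF y. g y + ereal ((norm (y - x))\<^sup>2 / (2 * \<nu>))) > -\<infinity>)"

definition frechet_subdiff :: "('a::real_inner \<Rightarrow> ereal) \<Rightarrow> 'a \<Rightarrow> 'a set" where
  "frechet_subdiff g x = {v. \<bar>g x\<bar> \<noteq> \<infinity> \<and>
     (\<forall>e>0. \<exists>d>0. \<forall>y. norm (y - x) < d \<longrightarrow>
         g y \<ge> g x + ereal (inner v (y - x) - e * norm (y - x)))}"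

definition limiting_subdiff :: "('a::real_inner \<Rightarrow> ereal) \<Rightarrow> 'a \<Rightarrow> 'a set" where
  "limiting_subdiff g x = {v. \<exists>xs vs. xs \<longlonglongrightarrow> x \<and> (\<lambda>j. g (xs j)) \<longlonglongrightarrow> g x \<and>
     (\<forall>j. vs j \<in> frechet_subdiff g (xs j)) \<and> vs \<longlonglongrightarrow> v}"

text \<open>f :: R^n \<Rightarrow> R, gradient g = \<nabla>f, B x symmetric matrix, psi x s = \<psi>(s;x).\<close>

definition phi :: "(real^'n \<Rightarrow> real) \<Rightarrow> (real^'n \<Rightarrow> real^'n) \<Rightarrow> (real^'n \<Rightarrow> real^'n^'n)
                   \<Rightarrow> real^'n \<Rightarrow> real^'n \<Rightarrow> real" where
  "phi f g B x s = f x + inner (g x) s + 1/2 * inner s (B x *v s)"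

definition model :: "(real^'n \<Rightarrow> real) \<Rightarrow> (real^'n \<Rightarrow> real^'n) \<Rightarrow> (real^'n \<Rightarrow> real^'n^'n)
                   \<Rightarrow> (real^'n \<Rightarrow> real^'n \<Rightarrow> ereal) \<Rightarrow> real^'n \<Rightarrow> real \<Rightarrow> real^'n \<Rightarrow> ereal" where
  "model f g B psi x \<sigma> s = ereal (phi f g B x s + 1/2 * \<sigma> * (norm s)\<^sup>2) + psi x s"

definition phi_cp :: "(real^'n \<Rightarrow> real) \<Rightarrow> (real^'n \<Rightarrow> real^'n) \<Rightarrow> real^'n \<Rightarrow> real^'n \<Rightarrow> real" where
  "phi_cp f g x s = f x + inner (g x) s"

text \<open>m_cp(s;x,\<nu>^{-1}); the argument \<nu> is the step length (so \<nu>^{-1} is the regularisation).\<close>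
definition model_cp :: "(real^'n \<Rightarrow> real) \<Rightarrow> (real^'n \<Rightarrow> real^'n)
                   \<Rightarrow> (real^'n \<Rightarrow> real^'n \<Rightarrow> ereal) \<Rightarrow> real^'n \<Rightarrow> real \<Rightarrow> real^'n \<Rightarrow> ereal" where
  "model_cp f g psi x \<nu> s = ereal (phi_cp f g x s + 1/2 * (1/\<nu>) * (norm s)\<^sup>2) + psi x s"

definition P_cp :: "(real^'n \<Rightarrow> real) \<Rightarrow> (real^'n \<Rightarrow> real^'n)
                   \<Rightarrow> (real^'n \<Rightarrow> real^'n \<Rightarrow> ereal) \<Rightarrow> real^'n \<Rightarrow> real \<Rightarrow> (real^'n) set" where
  "P_cp f g psi x \<nu> = {s. \<forall>t. model_cp f g psi x \<nu> s \<le> model_cp f g psi x \<nu> t}"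

text \<open>\<xi>_cp(x,\<nu>^{-1}) computed with the chosen s_cp\<close>
definition xi_cp :: "(real^'n \<Rightarrow> real) \<Rightarrow> (real^'n \<Rightarrow> real^'n) \<Rightarrow> (real^'n \<Rightarrow> ereal)
                   \<Rightarrow> (real^'n \<Rightarrow> real^'n \<Rightarrow> ereal) \<Rightarrow> real^'n \<Rightarrow> real^'n \<Rightarrow> ereal" where
  "xi_cp f g h psi x scp = ereal (f x) + h x - (ereal (phi_cp f g x scp) + psi x scp)"

text \<open>the ratio \<rho>_k, computed in ereal arithmetic (\<infinity>*0 = 0, \<infinity>/\<infinity> = 0)\<close>
definition rho :: "(real^'n \<Rightarrow> real) \<Rightarrow> (real^'n \<Rightarrow> real^'n) \<Rightarrow> (real^'n \<Rightarrow> ereal)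
                   \<Rightarrow> (real^'n \<Rightarrow> real^'n^'n) \<Rightarrow> (real^'n \<Rightarrow> real^'n \<Rightarrow> ereal)
                   \<Rightarrow> real^'n \<Rightarrow> real^'n \<Rightarrow> ereal" where
  "rho f g h B psi x s =
     (ereal (f x) + h x - (ereal (f (x + s)) + h (x + s))) /
     (ereal (phi f g B x 0) + psi x 0 - (ereal (phi f g B x s) + psi x s))"

definition specnorm :: "real^'n^'n \<Rightarrow> real" where
  "specnorm M = onorm (\<lambda>v. M *v v)"

definition nu_step :: "real \<Rightarrow> real^'n^'n \<Rightarrow> real \<Rightarrow> real" where
  "nu_step \<theta>1 M \<sigma> = \<theta>1 / (specnorm M + \<sigma>)"

definition MA1 :: "(real^'n \<Rightarrow> ereal) \<Rightarrow> (real^'n \<Rightarrow> real^'n \<Rightarrow> ereal) \<Rightarrow> bool" where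
  "MA1 h psi \<longleftrightarrow> (\<forall>x. proper_fun (psi x) \<and> lsc_fun (psi x) \<and> prox_bounded (psi x) \<and>
       psi x 0 = h x \<and> limiting_subdiff (psi x) 0 = limiting_subdiff h x)"

text \<open>A run of Algorithm R2N: iterates x, regularisation parameters \<sigma>, Cauchy steps scp,
  tentative steps t (before the safeguard reset) and accepted steps s.\<close>
definition R2N_run ::
  "(real^'n \<Rightarrow> real) \<Rightarrow> (real^'n \<Rightarrow> real^'n) \<Rightarrow> (real^'n \<Rightarrow> ereal)
   \<Rightarrow> (real^'n \<Rightarrow> real^'n^'n) \<Rightarrow> (real^'n \<Rightarrow> real^'n \<Rightarrow> ereal)
   \<Rightarrow> real \<Rightarrow> real \<Rightarrow> real \<Rightarrow> real \<Rightarrow> real \<Rightarrow> real \<Rightarrow> real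
   \<Rightarrow> (nat \<Rightarrow> real^'n) \<Rightarrow> (nat \<Rightarrow> real) \<Rightarrow> (nat \<Rightarrow> real^'n) \<Rightarrow> (nat \<Rightarrow> real^'n)
   \<Rightarrow> (nat \<Rightarrow> real^'n) \<Rightarrow> bool" where
  "R2N_run f g h B psi \<theta>1 \<theta>2 \<eta>1 \<eta>2 \<gamma>1 \<gamma>2 \<gamma>3 x \<sigma> scp t s \<longleftrightarrow>
     0 < \<theta>1 \<and> \<theta>1 < 1 \<and> 1 < \<theta>2 \<and> 0 < \<eta>1 \<and> \<eta>1 \<le> \<eta>2 \<and> \<eta>2 < 1 \<and>
     0 < \<gamma>3 \<and> \<gamma>3 \<le> 1 \<and> 1 < \<gamma>1 \<and> \<gamma>1 \<le> \<gamma>2 \<and>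
     h (x 0) < \<infinity> \<and> \<sigma> 0 > 0 \<and>
     (\<forall>k. let \<nu> = nu_step \<theta>1 (B (x k)) (\<sigma> k);
              \<rho> = rho f g h B psi (x k) (s k)
          in scp k \<in> P_cp f g psi (x k) \<nu> \<and>
             model f g B psi (x k) (\<sigma> k) (t k) \<le> model f g B psi (x k) (\<sigma> k) (scp k) \<and>
             s k = (if norm (t k) > \<theta>2 * norm (scp k) then scp k else t k) \<and>
             x (Suc k) = (if \<rho> \<ge> ereal \<eta>1 then x k + s k else x k) \<and>
             (\<rho> \<ge> ereal \<eta>2 \<longrightarrow> \<gamma>3 * \<sigma> k \<le> \<sigma> (Suc k) \<and> \<sigma> (Suc k) \<le> \<sigma> k) \<and>
             (ereal \<eta>1 \<le> \<rho> \<and> \<rho> < ereal \<eta>2 \<longrightarrow> \<sigma> k \<le> \<sigma> (Suc k) \<and> \<sigma> (Suc k) \<le> \<gamma>1 * \<sigma> k) \<and>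
             (\<rho> < ereal \<eta>1 \<longrightarrow> \<gamma>1 * \<sigma> k \<le> \<sigma> (Suc k) \<and> \<sigma> (Suc k) \<le> \<gamma>2 * \<sigma> k))"

end

theory Submission
  imports Defs
begin

text \<open>
  Every iteration moves the iterate by at most a fixed multiple of the decrease of \<open>f + h\<close>.
  For an accepted step \<open>s\<close>, the safeguard gives \<open>\<parallel>s\<parallel> \<le> \<theta>2 \<parallel>scp\<parallel>\<close>; optimality of the Cauchy
  point gives \<open>\<parallel>scp\<parallel>\<^sup>2 \<le> 2 \<nu> \<xi>\<close>, which together with \<open>\<nu> \<alpha>\<^sup>2 \<le> \<xi>\<close> yields \<open>\<alpha> \<parallel>scp\<parallel> \<le> 2 \<xi>\<close>.
  The model decrease is at least \<open>(1 - \<theta>1) \<xi>\<close>, and acceptance turns it into an actual decrease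
  of at least \<open>\<eta>1 (1 - \<theta>1) \<xi>\<close>. As \<open>f + h\<close> is bounded below along the iterates, the step
  lengths are summable, so the iterates form a Cauchy sequence.
\<close>

lemma convergent_if_step_norms_bounded_by_descent:
  fixes x :: "nat \<Rightarrow> 'a::banach" and F :: "nat \<Rightarrow> real"
  assumes step: "\<And>k. norm (x (Suc k) - x k) \<le> K * (F k - F (Suc k))"
    and bounded: "\<And>k. L \<le> F k" and K: "0 < K"
  shows "convergent x"
proof -
  have "F (Suc k) \<le> F k" for k
    using order_trans[OF norm_ge_zero step[of k]] K by (simp add: zero_le_mult_iff)
  then have "decseq F" by (rule decseq_SucI)
  then obtain c where "F \<longlonglongrightarrow> c" using bounded decseq_convergent by blast
  then have "summable (\<lambda>k. K * (F k - F (Suc k)))"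
    by (intro summable_mult telescope_summable')
  then have "summable (\<lambda>k. x (Suc k) - x k)"
    by (rule summable_comparison_test[rotated]) (use step in auto)
  then have "convergent (\<lambda>n. x n - x 0)"
    by (simp add: summable_iff_convergent sum_lessThan_telescope)
  then show ?thesis
    using convergent_add_const_iff[of "x 0" "\<lambda>n. x n - x 0"] by simp
qed

lemma sqrt_quotient_lower_bound_imp:
  fixes \<nu> \<alpha> \<xi> :: real
  assumes "0 < \<nu>" "0 < \<alpha>" "\<alpha> \<le> sqrt (1 / \<nu>) * sqrt \<xi>"
  shows "0 < \<xi>" "\<nu> * \<alpha>\<^sup>2 \<le> \<xi>"
proof -
  from assms have "0 < sqrt (1 / \<nu>) * sqrt \<xi>" by linarith
  then show "0 < \<xi>" using \<open>0 < \<nu>\<close> by (simp add: zero_less_mult_iff)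
  have "\<alpha>\<^sup>2 \<le> (sqrt (1 / \<nu>) * sqrt \<xi>)\<^sup>2" using assms by (simp add: power_mono)
  also have "\<dots> = \<xi> / \<nu>" using \<open>0 < \<nu>\<close> \<open>0 < \<xi>\<close> by (simp add: power_mult_distrib)
  finally show "\<nu> * \<alpha>\<^sup>2 \<le> \<xi>" using \<open>0 < \<nu>\<close> by (simp add: field_simps)
qed

lemma mult_le_double_of_sq_bounds:
  fixes \<nu> \<alpha> \<xi> c :: real
  assumes "0 < \<nu>" "0 < \<alpha>" "0 \<le> c" "\<nu> * \<alpha>\<^sup>2 \<le> \<xi>" "1/2 * (1/\<nu>) * c\<^sup>2 \<le> \<xi>"
  shows "c * \<alpha> \<le> 2 * \<xi>"
proof -
  have "0 \<le> \<nu> * \<alpha>\<^sup>2" using assms(1) by simp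
  with assms(4) have "0 \<le> \<xi>" by linarith
  have "c\<^sup>2 = 2 * \<nu> * (1/2 * (1/\<nu>) * c\<^sup>2)" using assms(1) by simp
  also have "\<dots> \<le> 2 * \<nu> * \<xi>" using assms(1,5) by (intro mult_left_mono) auto
  finally have "c\<^sup>2 * \<alpha>\<^sup>2 \<le> 2 * \<nu> * \<xi> * \<alpha>\<^sup>2" by (rule mult_right_mono) simp
  then have "(c * \<alpha>)\<^sup>2 \<le> 2 * \<xi> * (\<nu> * \<alpha>\<^sup>2)" by (simp add: power_mult_distrib mult_ac)
  also have "\<dots> \<le> 2 * \<xi> * \<xi>" using assms(4) \<open>0 \<le> \<xi>\<close> by (intro mult_left_mono) auto
  also have "\<dots> \<le> (2 * \<xi>)\<^sup>2" using \<open>0 \<le> \<xi>\<close> by (simp add: power2_eq_square)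
  finally show ?thesis by (rule power2_le_imp_le) (use \<open>0 \<le> \<xi>\<close> in simp)
qed

lemma specnorm_nonneg: "0 \<le> specnorm M"
  unfolding specnorm_def by (rule onorm_pos_le[OF matrix_vector_mul_bounded_linear])

lemma inner_mult_le_specnorm: "inner v (M *v v) \<le> specnorm M * (norm v)\<^sup>2"
proof -
  have "inner v (M *v v) \<le> norm v * norm (M *v v)" by (rule norm_cauchy_schwarz)
  also have "\<dots> \<le> norm v * (specnorm M * norm v)"
    unfolding specnorm_def by (intro mult_left_mono onorm[OF matrix_vector_mul_bounded_linear]) simp
  finally show ?thesis by (simp add: power2_eq_square mult_ac)
qed

lemma phi_le_phi_cp: "phi f g B x s \<le> phi_cp f g x s + 1/2 * specnorm (B x) * (norm s)\<^sup>2"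
  using inner_mult_le_specnorm[of s "B x"] by (simp add: phi_def phi_cp_def)

lemma nu_step_pos:
  assumes "0 < \<theta>1" "0 < \<sigma>"
  shows "0 < nu_step \<theta>1 M \<sigma>"
  using assms specnorm_nonneg[of M] by (simp add: nu_step_def)

lemma specnorm_add_eq_nu_step:
  assumes "0 < \<theta>1" "0 < \<sigma>"
  shows "specnorm M + \<sigma> = \<theta>1 / nu_step \<theta>1 M \<sigma>"
  using assms specnorm_nonneg[of M] by (simp add: nu_step_def)

lemma xi_cp_pos_imp_finite:
  assumes "0 < real_of_ereal (xi_cp f g h psi x s)"
  obtains hx ps where "h x = ereal hx" "psi x s = ereal ps"
    "real_of_ereal (xi_cp f g h psi x s) = f x + hx - phi_cp f g x s - ps"
  using assms unfolding xi_cp_def by (cases "h x"; cases "psi x s") auto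

lemma P_cp_le_model_cp_zero:
  assumes "s \<in> P_cp f g psi x \<nu>" "psi x 0 = ereal hx" "psi x s = ereal ps"
  shows "phi_cp f g x s + 1/2 * (1/\<nu>) * (norm s)\<^sup>2 + ps \<le> f x + hx"
proof -
  have "model_cp f g psi x \<nu> s \<le> model_cp f g psi x \<nu> 0"
    using assms(1) unfolding P_cp_def by blast
  then show ?thesis using assms(2,3) by (simp add: model_cp_def phi_cp_def)
qed

lemma safeguarded_step_model_le:
  assumes model: "model f g B psi x \<sigma> t \<le> model f g B psi x \<sigma> c"
    and psi_c: "psi x c = ereal pc" and psi_ninf: "\<And>u. psi x u \<noteq> -\<infinity>"
    and "1 \<le> \<theta>2" and s: "s = (if norm t > \<theta>2 * norm c then c else t)"
  obtains ps where "psi x s = ereal ps"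
    "phi f g B x s + 1/2 * \<sigma> * (norm s)\<^sup>2 + ps \<le> phi f g B x c + 1/2 * \<sigma> * (norm c)\<^sup>2 + pc"
    "norm s \<le> \<theta>2 * norm c"
proof (cases "norm t > \<theta>2 * norm c")
  case True
  then show ?thesis using that[of pc] s psi_c \<open>1 \<le> \<theta>2\<close> by (simp add: mult_le_cancel_right1)
next
  case False
  have "psi x t \<noteq> \<infinity>" using model psi_c by (auto simp: model_def)
  then obtain pt where "psi x t = ereal pt" using psi_ninf[of t] by (cases "psi x t") auto
  then show ?thesis using that[of pt] False s model psi_c by (simp add: model_def)
qed

lemma model_decrease_ge_cauchy_decrease:
  assumes cp: "phi_cp f g x c + 1/2 * (1/\<nu>) * (norm c)\<^sup>2 + pc \<le> f x + hx"
    and step: "phi f g B x s + 1/2 * \<sigma> * (norm s)\<^sup>2 + ps \<le> phi f g B x c + 1/2 * \<sigma> * (norm c)\<^sup>2 + pc"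
    and nu: "specnorm (B x) + \<sigma> = \<theta>1 / \<nu>" and "0 \<le> \<sigma>" "0 \<le> \<theta>1"
  shows "(1 - \<theta>1) * (f x + hx - phi_cp f g x c - pc) \<le> f x + hx - phi f g B x s - ps"
proof -
  have "1/2 * specnorm (B x) * (norm c)\<^sup>2 + 1/2 * \<sigma> * (norm c)\<^sup>2
      = 1/2 * (specnorm (B x) + \<sigma>) * (norm c)\<^sup>2"
    by (simp add: algebra_simps)
  also have "\<dots> = \<theta>1 * (1/2 * (1/\<nu>) * (norm c)\<^sup>2)"
    by (simp add: nu)
  also have "\<dots> \<le> \<theta>1 * (f x + hx - phi_cp f g x c - pc)"
    using cp \<open>0 \<le> \<theta>1\<close> by (intro mult_left_mono) auto
  finally have "1/2 * specnorm (B x) * (norm c)\<^sup>2 + 1/2 * \<sigma> * (norm c)\<^sup>2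
      \<le> \<theta>1 * (f x + hx - phi_cp f g x c - pc)" .
  moreover have "0 \<le> 1/2 * \<sigma> * (norm s)\<^sup>2" using \<open>0 \<le> \<sigma>\<close> by simp
  moreover have "(1 - \<theta>1) * (f x + hx - phi_cp f g x c - pc)
      = (f x + hx - phi_cp f g x c - pc) - \<theta>1 * (f x + hx - phi_cp f g x c - pc)"
    by (simp add: algebra_simps)
  ultimately show ?thesis using step phi_le_phi_cp[of f g B x c] by linarith
qed

lemma rho_ge_imp_decrease:
  assumes rho: "ereal \<eta> \<le> rho f g h B psi x s" and "0 < \<eta>"
    and model_decrease: "0 < f x + hx - phi f g B x s - ps"
    and "h x = ereal hx" "psi x 0 = h x" "psi x s = ereal ps" "h (x + s) \<noteq> -\<infinity>"
  obtains hs where "h (x + s) = ereal hs"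
    "\<eta> * (f x + hx - phi f g B x s - ps) \<le> f x + hx - (f (x + s) + hs)"
proof -
  have "rho f g h B psi x s = (ereal (f x + hx) - (ereal (f (x + s)) + h (x + s))) /
      ereal (f x + hx - phi f g B x s - ps)"
    using assms(4-6) by (simp add: rho_def phi_def algebra_simps)
  then show ?thesis
    using rho model_decrease that \<open>0 < \<eta>\<close> \<open>h (x + s) \<noteq> -\<infinity>\<close>
    by (cases "h (x + s)") (auto simp: field_simps)
qed

lemma R2N_run_params:
  assumes "R2N_run f g h B psi \<theta>1 \<theta>2 \<eta>1 \<eta>2 \<gamma>1 \<gamma>2 \<gamma>3 x \<sigma> scp t s"
  shows "0 < \<theta>1" "\<theta>1 < 1" "1 < \<theta>2" "0 < \<eta>1" "\<eta>1 \<le> \<eta>2"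
    "0 < \<gamma>3" "1 < \<gamma>1" "0 < \<sigma> 0"
  using assms unfolding R2N_run_def by auto

lemma R2N_run_iteration:
  fixes k :: nat
  assumes "R2N_run f g h B psi \<theta>1 \<theta>2 \<eta>1 \<eta>2 \<gamma>1 \<gamma>2 \<gamma>3 x \<sigma> scp t s"
  defines "\<rho> \<equiv> rho f g h B psi (x k) (s k)"
  shows "scp k \<in> P_cp f g psi (x k) (nu_step \<theta>1 (B (x k)) (\<sigma> k))"
    and "model f g B psi (x k) (\<sigma> k) (t k) \<le> model f g B psi (x k) (\<sigma> k) (scp k)"
    and "s k = (if norm (t k) > \<theta>2 * norm (scp k) then scp k else t k)"
    and "x (Suc k) = (if \<rho> \<ge> ereal \<eta>1 then x k + s k else x k)"
    and "\<rho> \<ge> ereal \<eta>2 \<Longrightarrow> \<gamma>3 * \<sigma> k \<le> \<sigma> (Suc k)"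
    and "ereal \<eta>1 \<le> \<rho> \<Longrightarrow> \<rho> < ereal \<eta>2 \<Longrightarrow> \<sigma> k \<le> \<sigma> (Suc k)"
    and "\<rho> < ereal \<eta>1 \<Longrightarrow> \<gamma>1 * \<sigma> k \<le> \<sigma> (Suc k)"
  using assms unfolding R2N_run_def Let_def by blast+

lemma R2N_run_sigma_pos:
  assumes run: "R2N_run f g h B psi \<theta>1 \<theta>2 \<eta>1 \<eta>2 \<gamma>1 \<gamma>2 \<gamma>3 x \<sigma> scp t s"
  shows "0 < \<sigma> k"
proof (induction k)
  case 0
  show ?case using R2N_run_params[OF run] by simp
next
  case (Suc k)
  note par = R2N_run_params[OF run]
  consider "ereal \<eta>2 \<le> rho f g h B psi (x k) (s k)"
    | "ereal \<eta>1 \<le> rho f g h B psi (x k) (s k)" "rho f g h B psi (x k) (s k) < ereal \<eta>2"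
    | "rho f g h B psi (x k) (s k) < ereal \<eta>1"
    by (meson not_le)
  then show ?case
  proof cases
    case 1
    have "0 < \<gamma>3 * \<sigma> k" using Suc par by simp
    with R2N_run_iteration(5)[OF run 1] show ?thesis by linarith
  next
    case 2
    with Suc R2N_run_iteration(6)[OF run 2] show ?thesis by linarith
  next
    case 3
    have "0 < \<gamma>1 * \<sigma> k" using Suc par by simp
    with R2N_run_iteration(7)[OF run 3] show ?thesis by linarith
  qed
qed

lemma R2N_run_step_le_model_decrease:
  fixes k :: nat
  assumes run: "R2N_run f g h B psi \<theta>1 \<theta>2 \<eta>1 \<eta>2 \<gamma>1 \<gamma>2 \<gamma>3 x \<sigma> scp t s"
    and ma1: "MA1 h psi" and \<alpha>: "0 < \<alpha>"
    and alpha_bound: "\<alpha> \<le> sqrt (1 / nu_step \<theta>1 (B (x k)) (\<sigma> k)) *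
                          sqrt (real_of_ereal (xi_cp f g h psi (x k) (scp k)))"
  obtains hx ps where "h (x k) = ereal hx" "psi (x k) (s k) = ereal ps"
    "0 < f (x k) + hx - phi f g B (x k) (s k) - ps"
    "norm (s k) \<le> 2 * \<theta>2 / (\<alpha> * (1 - \<theta>1)) * (f (x k) + hx - phi f g B (x k) (s k) - ps)"
proof -
  note par = R2N_run_params[OF run]
  define \<nu> where "\<nu> = nu_step \<theta>1 (B (x k)) (\<sigma> k)"
  define \<xi> where "\<xi> = real_of_ereal (xi_cp f g h psi (x k) (scp k))"
  have \<sigma>: "0 < \<sigma> k" by (rule R2N_run_sigma_pos[OF run])
  have \<nu>: "0 < \<nu>" unfolding \<nu>_def using par(1) \<sigma> by (rule nu_step_pos)
  have \<xi>: "0 < \<xi>" "\<nu> * \<alpha>\<^sup>2 \<le> \<xi>"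
    using sqrt_quotient_lower_bound_imp[OF \<nu> \<alpha>] alpha_bound unfolding \<nu>_def \<xi>_def by auto
  from \<xi>(1) obtain hx pc where hx: "h (x k) = ereal hx" and pc: "psi (x k) (scp k) = ereal pc"
    and \<xi>_eq: "\<xi> = f (x k) + hx - phi_cp f g (x k) (scp k) - pc"
    unfolding \<xi>_def by (rule xi_cp_pos_imp_finite)
  have psi: "psi (x k) 0 = h (x k)" "\<And>u. psi (x k) u \<noteq> -\<infinity>"
    using ma1 unfolding MA1_def proper_fun_def by auto
  have cp: "phi_cp f g (x k) (scp k) + 1/2 * (1/\<nu>) * (norm (scp k))\<^sup>2 + pc \<le> f (x k) + hx"
    using P_cp_le_model_cp_zero[OF R2N_run_iteration(1)[OF run, of k] _ pc] psi(1) hx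
    unfolding \<nu>_def by simp
  have "1 \<le> \<theta>2" using par by simp
  obtain ps where ps: "psi (x k) (s k) = ereal ps"
    and model: "phi f g B (x k) (s k) + 1/2 * \<sigma> k * (norm (s k))\<^sup>2 + ps
      \<le> phi f g B (x k) (scp k) + 1/2 * \<sigma> k * (norm (scp k))\<^sup>2 + pc"
    and s_le: "norm (s k) \<le> \<theta>2 * norm (scp k)"
    by (rule safeguarded_step_model_le[OF R2N_run_iteration(2)[OF run] pc psi(2)
          \<open>1 \<le> \<theta>2\<close> R2N_run_iteration(3)[OF run]])
  define \<Delta> where "\<Delta> = f (x k) + hx - phi f g B (x k) (s k) - ps"
  have \<Delta>: "(1 - \<theta>1) * \<xi> \<le> \<Delta>"
    unfolding \<Delta>_def \<xi>_eq using par \<sigma>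
    by (intro model_decrease_ge_cauchy_decrease[OF cp model])
      (simp_all add: \<nu>_def specnorm_add_eq_nu_step)
  have "0 < (1 - \<theta>1) * \<xi>" using \<xi>(1) par(2) by simp
  with \<Delta> have "0 < \<Delta>" by linarith
  have "norm (scp k) * \<alpha> \<le> 2 * \<xi>"
    using cp \<xi>_eq by (intro mult_le_double_of_sq_bounds[OF \<nu> \<alpha> norm_ge_zero \<xi>(2)]) simp
  then have "norm (scp k) \<le> 2 * \<xi> / \<alpha>" using \<alpha> by (simp add: pos_le_divide_eq)
  then have "\<theta>2 * norm (scp k) \<le> \<theta>2 * (2 * \<xi> / \<alpha>)"
    using \<open>1 \<le> \<theta>2\<close> by (intro mult_left_mono) auto
  with s_le have "norm (s k) \<le> \<theta>2 * (2 * \<xi> / \<alpha>)" by (rule order_trans)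
  also have "\<dots> = 2 * \<theta>2 / (\<alpha> * (1 - \<theta>1)) * ((1 - \<theta>1) * \<xi>)"
    using par \<alpha> by (simp add: field_simps)
  also have "\<dots> \<le> 2 * \<theta>2 / (\<alpha> * (1 - \<theta>1)) * \<Delta>"
    using \<Delta> par \<alpha> by (intro mult_left_mono) auto
  finally show ?thesis using that hx ps \<open>0 < \<Delta>\<close> unfolding \<Delta>_def by blast
qed

text \<open>On rejected iterations both sides vanish.\<close>

lemma R2N_run_step_le_decrease:
  fixes k :: nat
  assumes run: "R2N_run f g h B psi \<theta>1 \<theta>2 \<eta>1 \<eta>2 \<gamma>1 \<gamma>2 \<gamma>3 x \<sigma> scp t s"
    and ma1: "MA1 h psi" and h_proper: "proper_fun h" and \<alpha>: "0 < \<alpha>"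
    and alpha_bound: "\<alpha> \<le> sqrt (1 / nu_step \<theta>1 (B (x k)) (\<sigma> k)) *
                          sqrt (real_of_ereal (xi_cp f g h psi (x k) (scp k)))"
  obtains hx hx' where "h (x k) = ereal hx" "h (x (Suc k)) = ereal hx'"
    "norm (x (Suc k) - x k) \<le> 2 * \<theta>2 / (\<alpha> * (\<eta>1 * (1 - \<theta>1))) * (f (x k) + hx - (f (x (Suc k)) + hx'))"
proof -
  note par = R2N_run_params[OF run]
  obtain hx ps where hx: "h (x k) = ereal hx" and ps: "psi (x k) (s k) = ereal ps"
    and \<Delta>: "0 < f (x k) + hx - phi f g B (x k) (s k) - ps"
    and s_le: "norm (s k) \<le> 2 * \<theta>2 / (\<alpha> * (1 - \<theta>1)) * (f (x k) + hx - phi f g B (x k) (s k) - ps)"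
    by (rule R2N_run_step_le_model_decrease[OF run ma1 \<alpha> alpha_bound])
  let ?\<Delta> = "f (x k) + hx - phi f g B (x k) (s k) - ps"
  show ?thesis
  proof (cases "ereal \<eta>1 \<le> rho f g h B psi (x k) (s k)")
    case True
    have "psi (x k) 0 = h (x k)" using ma1 unfolding MA1_def by blast
    moreover have "h (x k + s k) \<noteq> -\<infinity>" using h_proper unfolding proper_fun_def by blast
    ultimately obtain hs where hs: "h (x k + s k) = ereal hs"
      and decrease: "\<eta>1 * ?\<Delta> \<le> f (x k) + hx - (f (x k + s k) + hs)"
      using rho_ge_imp_decrease[OF True par(4) \<Delta> hx _ ps] by blast
    have "2 * \<theta>2 / (\<alpha> * (1 - \<theta>1)) * ?\<Delta> = 2 * \<theta>2 / (\<alpha> * (\<eta>1 * (1 - \<theta>1))) * (\<eta>1 * ?\<Delta>)"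
      using par \<alpha> by (simp add: field_simps)
    also have "\<dots> \<le> 2 * \<theta>2 / (\<alpha> * (\<eta>1 * (1 - \<theta>1))) * (f (x k) + hx - (f (x k + s k) + hs))"
      using decrease par \<alpha> by (intro mult_left_mono) auto
    finally show ?thesis
      using that[of hx hs] s_le hx hs R2N_run_iteration(4)[OF run, of k] True by simp
  next
    case False
    then show ?thesis using that[of hx hx] hx R2N_run_iteration(4)[OF run, of k] by simp
  qed
qed

theorem lemma5p2:
  fixes f :: "real^'n \<Rightarrow> real" and g :: "real^'n \<Rightarrow> real^'n"
    and h :: "real^'n \<Rightarrow> ereal" and B :: "real^'n \<Rightarrow> real^'n^'n"
    and psi :: "real^'n \<Rightarrow> real^'n \<Rightarrow> ereal"
    and \<theta>1 \<theta>2 \<eta>1 \<eta>2 \<gamma>1 \<gamma>2 \<gamma>3 :: real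
    and x :: "nat \<Rightarrow> real^'n" and \<sigma> :: "nat \<Rightarrow> real"
    and scp t s :: "nat \<Rightarrow> real^'n"
    and fh_low \<alpha> :: real
  assumes grad_f: "\<forall>y. GDERIV f y :> g y" and C1: "continuous_on UNIV g"
    and h_proper: "proper_fun h" and h_lsc: "lsc_fun h"
    and B_sym: "\<forall>y. transpose (B y) = B y"
    and ma1: "MA1 h psi"
    and run: "R2N_run f g h B psi \<theta>1 \<theta>2 \<eta>1 \<eta>2 \<gamma>1 \<gamma>2 \<gamma>3 x \<sigma> scp t s"
    and inf_succ: "infinite {k. rho f g h B psi (x k) (s k) \<ge> ereal \<eta>1}"
    and low: "\<forall>k. ereal (f (x k)) + h (x k) \<ge> ereal fh_low"
    and alpha_pos: "\<alpha> > 0"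
    and alpha_bound: "\<forall>k. sqrt (1 / nu_step \<theta>1 (B (x k)) (\<sigma> k)) *
                         sqrt (real_of_ereal (xi_cp f g h psi (x k) (scp k))) \<ge> \<alpha>"
  shows "Cauchy x \<and> convergent x"
proof -
  define K where "K = 2 * \<theta>2 / (\<alpha> * (\<eta>1 * (1 - \<theta>1)))"
  define F where "F k = f (x k) + real_of_ereal (h (x k))" for k
  have step: "norm (x (Suc k) - x k) \<le> K * (F k - F (Suc k))"
    and bounded: "fh_low \<le> F k" for k
  proof -
    obtain hx hx' where "h (x k) = ereal hx" "h (x (Suc k)) = ereal hx'"
      "norm (x (Suc k) - x k) \<le> K * (f (x k) + hx - (f (x (Suc k)) + hx'))"
      using R2N_run_step_le_decrease[OF run ma1 h_proper alpha_pos] alpha_bound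
      unfolding K_def by blast
    then show "norm (x (Suc k) - x k) \<le> K * (F k - F (Suc k))" "fh_low \<le> F k"
      using low[rule_format, of k] by (auto simp: F_def)
  qed
  have "0 < K" using R2N_run_params[OF run] alpha_pos by (simp add: K_def)
  with step bounded have "convergent x" by (rule convergent_if_step_norms_bounded_by_descent)
  then show ?thesis by (simp add: Cauchy_convergent_iff)
qed

end
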